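(* Let $S\subset\mathbf R^4$ be a surface and $p\in S$ a flat inflection point. Then for every unit normal vector $\nu\in N_pS$, the image of $S$ near $p$ under the orthogonal projection of $\mathbf R^4$ onto the hyperplane $\nu^\perp\cong\mathbf R^3$ (a surface in $\mathbf R^3$ near the image of $p$) has zero Gaussian curvature at the image of $p$, i.e. the image of $p$ lies on the parabolic curve of that projected surface.
   Context: Use an adapted orthonormal frame $e_1,e_2$ (tangent), $e_3,e_4$ (normal) at $p$; the second fundamental form is $\mathbf{II}(u)=(au_1^2+2bu_1u_2+cu_2^2)e_3+(eu_1^2+2fu_1u_2+gu_2^2)e_4$ for $u=u_1e_1+u_2e_2$. The curvature ellipse at $p$ is $\{\mathbf{II}(u):|u|=1\}\subset N_pS$ with $p$ as origin. $p$ is an inflection point if the curvature ellipse is a (possibly degenerate) segment contained in a line through the origin; it is a flat inflection point if moreover the origin is an endpoint of this segment. Equivalently, flat inflection points are the points where $\Delta=0$ and $K=0$, with $K=(ac-b^2)+(eg-f^2)$ and $\Delta=(ac-b^2)(eg-f^2)-\tfrac14(ag+ce-2bf)^2$. *)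

theory Defs
  imports "HOL-Analysis.Analysis"
begin

text \<open>A (local piece of a) surface in R^4 is given by a parametrization
  phi :: real * real => real^4, defined and C^2 on an open set of parameters.\<close>

definition pd :: "(real \<times> real \<Rightarrow> real^4) \<Rightarrow> real \<times> real \<Rightarrow> real \<times> real \<Rightarrow> real^4" where
  "pd f d x = frechet_derivative f (at x) d"

abbreviation du :: "real \<times> real" where "du \<equiv> (1, 0)"
abbreviation dv :: "real \<times> real" where "dv \<equiv> (0, 1)"

definition regular_C2_param :: "(real \<times> real \<Rightarrow> real^4) \<Rightarrow> (real \<times> real) set \<Rightarrow> bool" where
  "regular_C2_param phi U \<longleftrightarrow> open U \<and>
     (\<forall>x\<in>U. phi differentiable (at x)) \<and>
     (\<forall>d1\<in>{du, dv}. \<forall>x\<in>U. pd phi d1 differentiable (at x)) \<and>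
     (\<forall>d1\<in>{du, dv}. \<forall>d2\<in>{du, dv}. continuous_on U (pd (pd phi d1) d2)) \<and>
     (\<forall>x\<in>U. \<forall>s t. s *\<^sub>R pd phi du x + t *\<^sub>R pd phi dv x = 0 \<longrightarrow> s = 0 \<and> t = 0)"

definition tangent_space :: "(real \<times> real \<Rightarrow> real^4) \<Rightarrow> real \<times> real \<Rightarrow> (real^4) set" where
  "tangent_space phi x = span {pd phi du x, pd phi dv x}"

definition hess_term :: "(real \<times> real \<Rightarrow> real^4) \<Rightarrow> real \<times> real \<Rightarrow> real \<Rightarrow> real \<Rightarrow> real^4" where
  "hess_term phi x w1 w2 = (w1^2) *\<^sub>R pd (pd phi du) du x + (2 * w1 * w2) *\<^sub>R pd (pd phi du) dv x
      + (w2^2) *\<^sub>R pd (pd phi dv) dv x"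

text \<open>Curvature ellipse at p = phi x: the set of II(u) for unit tangent vectors u,
  where II(u) is the normal component of the second derivative along u
  (with p as origin of the normal plane N_pS).\<close>
definition curvature_ellipse :: "(real \<times> real \<Rightarrow> real^4) \<Rightarrow> real \<times> real \<Rightarrow> (real^4) set" where
  "curvature_ellipse phi x = {y. \<exists>w1 w2 t.
      norm (w1 *\<^sub>R pd phi du x + w2 *\<^sub>R pd phi dv x) = 1 \<and>
      t \<in> tangent_space phi x \<and> y = hess_term phi x w1 w2 - t \<and>
      (\<forall>z\<in>tangent_space phi x. y \<bullet> z = 0)}"

text \<open>Flat inflection point: the curvature ellipse is a (possibly degenerate) segment on a
  line through the origin having the origin as an endpoint, i.e. it contains the origin and
  lies in a closed ray from the origin.\<close>
definition flat_inflection :: "(real \<times> real \<Rightarrow> real^4) \<Rightarrow> real \<times> real \<Rightarrow> bool" where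
  "flat_inflection phi x \<longleftrightarrow> 0 \<in> curvature_ellipse phi x \<and>
      (\<exists>v. curvature_ellipse phi x \<subseteq> {s *\<^sub>R v | s. s \<ge> 0})"

definition proj_hyp :: "real^4 \<Rightarrow> real^4 \<Rightarrow> real^4" where
  "proj_hyp nu y = y - (y \<bullet> nu) *\<^sub>R nu"

text \<open>Gaussian curvature at psi x of a parametrized surface psi lying in the hyperplane
  nu^perp (a copy of R^3): K = (LN - M^2)/(EG - F^2), with n a unit normal to the surface
  inside nu^perp (the sign of n does not affect K).\<close>
definition gauss_curv_hyp :: "real^4 \<Rightarrow> (real \<times> real \<Rightarrow> real^4) \<Rightarrow> real \<times> real \<Rightarrow> real" where
  "gauss_curv_hyp nu psi x =
     (let pu = pd psi du x; pv = pd psi dv x;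
          n = (SOME n. norm n = 1 \<and> n \<bullet> nu = 0 \<and> n \<bullet> pu = 0 \<and> n \<bullet> pv = 0);
          E = pu \<bullet> pu; F = pu \<bullet> pv; G = pv \<bullet> pv;
          L = pd (pd psi du) du x \<bullet> n; M = pd (pd psi du) dv x \<bullet> n; N = pd (pd psi dv) dv x \<bullet> n
      in (L * N - M^2) / (E * G - F^2))"

end

theory Submission
  imports Defs
begin

text \<open>Projecting along a normal direction \<open>\<nu>\<close> does not move the tangent plane, and for
  any unit normal \<open>n\<close> of the projected surface (inside \<open>\<nu>\<^sup>\<bottom>\<close>) it does not change the
  \<open>n\<close>-component of the second derivatives. So the second fundamental form of the projection
  is the quadratic form \<open>w \<mapsto> II(w) \<bullet> n\<close> of the original surface. At a flat inflection
  point the curvature ellipse lies on a ray from the origin and passes through it, hence this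
  form is semidefinite and vanishes on a nonzero vector; its determinant, the numerator of
  the Gaussian curvature, is therefore zero.\<close>

lemma bounded_linear_proj_hyp: "bounded_linear (proj_hyp nu)"
  unfolding proj_hyp_def
  by (intro bounded_linear_sub bounded_linear_ident bounded_linear_scaleR_const
      bounded_linear_inner_left)

lemma proj_hyp_orthogonal: "y \<bullet> nu = 0 \<Longrightarrow> proj_hyp nu y = y"
  by (simp add: proj_hyp_def)

lemma inner_proj_hyp: "n \<bullet> nu = 0 \<Longrightarrow> proj_hyp nu y \<bullet> n = y \<bullet> n"
  by (simp add: proj_hyp_def inner_diff_left inner_diff_right inner_commute)

lemma pd_linear_compose:
  assumes "bounded_linear f" and "phi differentiable (at x)"
  shows "pd (f \<circ> phi) d x = f (pd phi d x)"
proof -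
  have "(phi has_derivative frechet_derivative phi (at x)) (at x)"
    using assms(2) frechet_derivative_works by blast
  from bounded_linear.has_derivative[OF assms(1) this]
  have "((f \<circ> phi) has_derivative (\<lambda>h. f (frechet_derivative phi (at x) h))) (at x)"
    by (simp add: o_def)
  then show ?thesis
    unfolding pd_def by (metis frechet_derivative_at)
qed

lemma pd2_linear_compose:
  assumes "bounded_linear f" and "open U" and "x \<in> U"
    and "\<forall>y\<in>U. phi differentiable (at y)" and "pd phi d1 differentiable (at x)"
  shows "pd (pd (f \<circ> phi) d1) d2 x = f (pd (pd phi d1) d2 x)"
proof -
  have "f \<circ> pd phi d1 differentiable (at x)"
    using differentiable_chain_at[OF assms(5) bounded_linear_imp_differentiable[OF assms(1)]] .
  moreover have "(f \<circ> pd phi d1) y = pd (f \<circ> phi) d1 y" if "y \<in> U" for y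
    using pd_linear_compose[OF assms(1)] assms(4) that by simp
  ultimately have "frechet_derivative (f \<circ> pd phi d1) (at x)
      = frechet_derivative (pd (f \<circ> phi) d1) (at x)"
    by (rule frechet_derivative_transform_within_open[OF _ assms(2,3)])
  then have "pd (pd (f \<circ> phi) d1) d2 x = pd (f \<circ> pd phi d1) d2 x"
    by (simp add: pd_def)
  also have "\<dots> = f (pd (pd phi d1) d2 x)"
    using pd_linear_compose[OF assms(1,5)] .
  finally show ?thesis .
qed

lemma exists_unit_orthogonal3:
  fixes a b c :: "'a::euclidean_space"
  assumes "DIM('a) > 3"
  shows "\<exists>n. norm n = 1 \<and> n \<bullet> a = 0 \<and> n \<bullet> b = 0 \<and> n \<bullet> c = 0"
proof -
  have "dim {a, b, c} \<le> card {a, b, c}"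
    by (rule dim_le_card) (auto simp: span_base)
  also have "\<dots> \<le> 3"
    by (simp add: card_insert_le_m1)
  finally obtain m where "m \<noteq> 0" and m: "\<And>y. y \<in> span {a, b, c} \<Longrightarrow> orthogonal m y"
    using orthogonal_to_subspace_exists assms by (metis le_less_trans)
  then show ?thesis
    by (intro exI[of _ "m /\<^sub>R norm m"]) (auto simp: orthogonal_def span_base)
qed

lemma nonneg_quadratic_imp_linear_coeff_zero:
  fixes p q :: real
  assumes "\<And>t. 0 \<le> 2*t*p + t^2*q"
  shows "p = 0"
proof (rule ccontr)
  assume "p \<noteq> 0"
  define K where "K = \<bar>q\<bar> + 1"
  have K: "K > 0" "q < K"
    unfolding K_def by auto
  have "0 \<le> K^2 * (2*(-p/K)*p + (-p/K)^2*q)"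
    using assms[of "-p/K"] by simp
  also have "\<dots> = p^2 * (q - 2*K)"
    using K by (simp add: field_simps power2_eq_square)
  also have "\<dots> < 0"
    using K \<open>p \<noteq> 0\<close> by (simp add: mult_pos_neg)
  finally show False by simp
qed

text \<open>A nontrivial zero of a semidefinite form is a minimum, so the gradient \<open>(aL + bM, aM + bN)\<close>
  vanishes there and the matrix of the form is singular.\<close>

lemma psd_quadratic_form_singular:
  fixes L M N a b :: real
  assumes psd: "\<And>w1 w2. 0 \<le> w1^2*L + 2*w1*w2*M + w2^2*N"
    and zero: "a^2*L + 2*a*b*M + b^2*N = 0" and "a \<noteq> 0 \<or> b \<noteq> 0"
  shows "L*N - M^2 = 0"
proof -
  have "a*L + b*M = 0"
  proof (rule nonneg_quadratic_imp_linear_coeff_zero)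
    fix t
    have "0 \<le> (a+t)^2*L + 2*(a+t)*b*M + b^2*N" by (rule psd)
    also have "\<dots> = (a^2*L + 2*a*b*M + b^2*N) + 2*t*(a*L + b*M) + t^2*L"
      by (simp add: algebra_simps power2_eq_square)
    finally show "0 \<le> 2*t*(a*L + b*M) + t^2*L" using zero by simp
  qed
  moreover have "a*M + b*N = 0"
  proof (rule nonneg_quadratic_imp_linear_coeff_zero)
    fix t
    have "0 \<le> a^2*L + 2*a*(b+t)*M + (b+t)^2*N" by (rule psd)
    also have "\<dots> = (a^2*L + 2*a*b*M + b^2*N) + 2*t*(a*M + b*N) + t^2*N"
      by (simp add: algebra_simps power2_eq_square)
    finally show "0 \<le> 2*t*(a*M + b*N) + t^2*N" using zero by simp
  qed
  moreover have "(L*N - M^2)*a = N*(a*L + b*M) - M*(a*M + b*N)"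
    and "(L*N - M^2)*b = L*(a*M + b*N) - M*(a*L + b*M)"
    by (simp_all add: algebra_simps power2_eq_square)
  ultimately have "(L*N - M^2)*a = 0" and "(L*N - M^2)*b = 0"
    by simp_all
  then show ?thesis
    using \<open>a \<noteq> 0 \<or> b \<noteq> 0\<close> by auto
qed

lemma inner_hess_term:
  "hess_term phi x w1 w2 \<bullet> n = w1^2 * (pd (pd phi du) du x \<bullet> n)
     + 2*w1*w2 * (pd (pd phi du) dv x \<bullet> n) + w2^2 * (pd (pd phi dv) dv x \<bullet> n)"
  by (simp add: hess_term_def inner_add_left)

lemma hess_term_scaleR: "hess_term phi x (r*w1) (r*w2) = r^2 *\<^sub>R hess_term phi x w1 w2"
  by (simp add: hess_term_def scaleR_add_right power_mult_distrib algebra_simps power2_eq_square)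

lemma curvature_ellipse_memI:
  assumes "norm (w1 *\<^sub>R pd phi du x + w2 *\<^sub>R pd phi dv x) = 1"
  obtains y where "y \<in> curvature_ellipse phi x"
    and "\<And>n. \<forall>z\<in>tangent_space phi x. n \<bullet> z = 0 \<Longrightarrow> y \<bullet> n = hess_term phi x w1 w2 \<bullet> n"
proof -
  obtain t y where t: "t \<in> span {pd phi du x, pd phi dv x}"
    and y: "\<And>w. w \<in> span {pd phi du x, pd phi dv x} \<Longrightarrow> orthogonal y w"
    and decomp: "hess_term phi x w1 w2 = t + y"
    using orthogonal_subspace_decomp_exists by blast
  have "y \<in> curvature_ellipse phi x"
    unfolding curvature_ellipse_def tangent_space_def using assms t y decomp
    by (intro CollectI exI[of _ w1] exI[of _ w2] exI[of _ t]) (auto simp: orthogonal_def)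
  moreover have "y \<bullet> n = hess_term phi x w1 w2 \<bullet> n"
    if "\<forall>z\<in>tangent_space phi x. n \<bullet> z = 0" for n
  proof -
    have "t \<bullet> n = 0"
      using that t unfolding tangent_space_def by (metis inner_commute)
    then show ?thesis
      by (simp add: decomp inner_add_left)
  qed
  ultimately show ?thesis using that by blast
qed

lemma curvature_ellipse_memE:
  assumes "y \<in> curvature_ellipse phi x" and normal: "\<forall>z\<in>tangent_space phi x. n \<bullet> z = 0"
  obtains w1 w2 where "norm (w1 *\<^sub>R pd phi du x + w2 *\<^sub>R pd phi dv x) = 1"
    and "y \<bullet> n = hess_term phi x w1 w2 \<bullet> n"
proof -
  obtain w1 w2 t where "norm (w1 *\<^sub>R pd phi du x + w2 *\<^sub>R pd phi dv x) = 1"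
    and "t \<in> tangent_space phi x" and "y = hess_term phi x w1 w2 - t"
    using assms(1) unfolding curvature_ellipse_def by blast
  moreover have "t \<bullet> n = 0"
    using normal \<open>t \<in> tangent_space phi x\<close> by (metis inner_commute)
  ultimately show ?thesis
    using that by (simp add: inner_diff_left)
qed

text \<open>Here \<open>c = v \<bullet> n\<close> for the ray \<open>{s v | s \<ge> 0}\<close> containing the curvature ellipse; non-unit
  directions reduce to unit ones by homogeneity, which is where independence is needed.\<close>

lemma flat_inflection_normal_curvature_sign:
  assumes indep: "\<forall>s t. s *\<^sub>R pd phi du x + t *\<^sub>R pd phi dv x = 0 \<longrightarrow> s = 0 \<and> t = 0"
    and "flat_inflection phi x" and normal: "\<forall>z\<in>tangent_space phi x. n \<bullet> z = 0"
  obtains c where "\<And>w1 w2. \<exists>s\<ge>0. hess_term phi x w1 w2 \<bullet> n = s * c"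
proof -
  obtain v where ray: "curvature_ellipse phi x \<subseteq> {s *\<^sub>R v | s. s \<ge> 0}"
    using assms(2) unfolding flat_inflection_def by blast
  have "\<exists>s\<ge>0. hess_term phi x w1 w2 \<bullet> n = s * (v \<bullet> n)" for w1 w2
  proof (cases "w1 = 0 \<and> w2 = 0")
    case True
    then show ?thesis by (auto simp: hess_term_def)
  next
    case False
    define r where "r = norm (w1 *\<^sub>R pd phi du x + w2 *\<^sub>R pd phi dv x)"
    have "r > 0"
      using indep False unfolding r_def by auto
    have "(w1/r) *\<^sub>R pd phi du x + (w2/r) *\<^sub>R pd phi dv x
        = (1/r) *\<^sub>R (w1 *\<^sub>R pd phi du x + w2 *\<^sub>R pd phi dv x)"
      by (simp add: scaleR_add_right)
    then have "norm ((w1/r) *\<^sub>R pd phi du x + (w2/r) *\<^sub>R pd phi dv x) = 1"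
      using \<open>r > 0\<close> by (simp add: r_def)
    then obtain y where "y \<in> curvature_ellipse phi x"
      and y: "y \<bullet> n = hess_term phi x (w1/r) (w2/r) \<bullet> n"
      using curvature_ellipse_memI normal by metis
    then obtain s where "s \<ge> 0" and "y = s *\<^sub>R v"
      using ray by blast
    have "hess_term phi x w1 w2 = hess_term phi x (r * (w1/r)) (r * (w2/r))"
      using \<open>r > 0\<close> by simp
    also have "\<dots> = r^2 *\<^sub>R hess_term phi x (w1/r) (w2/r)"
      by (rule hess_term_scaleR)
    finally have "hess_term phi x w1 w2 \<bullet> n = (r^2 * s) * (v \<bullet> n)"
      using y \<open>y = s *\<^sub>R v\<close> by simp
    then show ?thesis
      using \<open>s \<ge> 0\<close> by (intro exI[of _ "r^2 * s"]) auto
  qed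
  then show ?thesis using that by blast
qed

lemma flat_inflection_normal_det_zero:
  assumes "\<forall>s t. s *\<^sub>R pd phi du x + t *\<^sub>R pd phi dv x = 0 \<longrightarrow> s = 0 \<and> t = 0"
    and "flat_inflection phi x" and normal: "\<forall>z\<in>tangent_space phi x. n \<bullet> z = 0"
  shows "(pd (pd phi du) du x \<bullet> n) * (pd (pd phi dv) dv x \<bullet> n) - (pd (pd phi du) dv x \<bullet> n)^2 = 0"
    (is "?L * ?N - ?M^2 = 0")
proof -
  obtain c where sign: "\<And>w1 w2. \<exists>s\<ge>0. hess_term phi x w1 w2 \<bullet> n = s * c"
    using flat_inflection_normal_curvature_sign assms by blast
  have "0 \<in> curvature_ellipse phi x"
    using assms(2) unfolding flat_inflection_def by blast
  then obtain a b where ab: "norm (a *\<^sub>R pd phi du x + b *\<^sub>R pd phi dv x) = 1"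
    and zero: "a^2 * ?L + 2*a*b * ?M + b^2 * ?N = 0"
    using curvature_ellipse_memE normal by (metis inner_hess_term inner_zero_left)
  have "a \<noteq> 0 \<or> b \<noteq> 0"
    using ab by auto
  show ?thesis
  proof (cases "c \<ge> 0")
    case True
    have "0 \<le> w1^2 * ?L + 2*w1*w2 * ?M + w2^2 * ?N" for w1 w2
      using sign[of w1 w2] True by (auto simp: inner_hess_term)
    then show ?thesis
      using psd_quadratic_form_singular zero \<open>a \<noteq> 0 \<or> b \<noteq> 0\<close> by blast
  next
    case False
    have "0 \<le> w1^2 * (-?L) + 2*w1*w2 * (-?M) + w2^2 * (-?N)" for w1 w2
    proof -
      obtain s where "s \<ge> 0" and "hess_term phi x w1 w2 \<bullet> n = s * c"
        using sign by blast
      moreover have "s * c \<le> 0"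
        using \<open>s \<ge> 0\<close> False by (simp add: mult_nonneg_nonpos)
      ultimately show ?thesis
        by (simp add: inner_hess_term)
    qed
    moreover have "a^2 * (-?L) + 2*a*b * (-?M) + b^2 * (-?N) = 0"
      using zero by simp
    ultimately have "(-?L) * (-?N) - (-?M)^2 = 0"
      using psd_quadratic_form_singular \<open>a \<noteq> 0 \<or> b \<noteq> 0\<close> by blast
    then show ?thesis by simp
  qed
qed

theorem mainTheorem7:
  fixes phi :: "real \<times> real \<Rightarrow> real^4" and U :: "(real \<times> real) set"
    and x0 :: "real \<times> real" and nu :: "real^4"
  assumes "regular_C2_param phi U" and "x0 \<in> U"
    and "flat_inflection phi x0"
    and "norm nu = 1" and "\<forall>z\<in>tangent_space phi x0. nu \<bullet> z = 0"
  shows "gauss_curv_hyp nu (proj_hyp nu \<circ> phi) x0 = 0"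
proof -
  let ?psi = "proj_hyp nu \<circ> phi" and ?pu = "pd phi du x0" and ?pv = "pd phi dv x0"
  note R = assms(1)[unfolded regular_C2_param_def]
  define n where "n = (SOME n. norm n = 1 \<and> n \<bullet> nu = 0 \<and> n \<bullet> ?pu = 0 \<and> n \<bullet> ?pv = 0)"
  have n: "norm n = 1 \<and> n \<bullet> nu = 0 \<and> n \<bullet> ?pu = 0 \<and> n \<bullet> ?pv = 0"
    unfolding n_def by (rule someI_ex) (rule exists_unit_orthogonal3, simp)
  have n_normal: "\<forall>z\<in>tangent_space phi x0. n \<bullet> z = 0"
    using n orthogonal_to_span unfolding tangent_space_def orthogonal_def by blast
  have pd1: "pd ?psi d x0 = pd phi d x0" if "d \<in> {du, dv}" for d
  proof -
    have "pd phi d x0 \<in> tangent_space phi x0"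
      using that by (auto simp: tangent_space_def span_base)
    then have "pd phi d x0 \<bullet> nu = 0"
      using assms(5) by (metis inner_commute)
    then show ?thesis
      using pd_linear_compose[OF bounded_linear_proj_hyp] proj_hyp_orthogonal R assms(2)
      by metis
  qed
  have pd2: "pd (pd ?psi d1) d2 x0 \<bullet> n = pd (pd phi d1) d2 x0 \<bullet> n" if "d1 \<in> {du, dv}" for d1 d2
    using pd2_linear_compose[OF bounded_linear_proj_hyp] inner_proj_hyp n R assms(2) that
    by metis
  have "(pd (pd phi du) du x0 \<bullet> n) * (pd (pd phi dv) dv x0 \<bullet> n) - (pd (pd phi du) dv x0 \<bullet> n)^2 = 0"
    using flat_inflection_normal_det_zero R assms(2,3) n_normal by blast
  then show ?thesis
    unfolding gauss_curv_hyp_def Let_def by (simp add: pd1 pd2 flip: n_def)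
qed

end
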